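(* Let $(K_d)_{d\in\mathbb N}$ be a sequence of isotropic convex bodies $K_d\subseteq\mathbb R^d$, and let $(A_d)_{d\in\mathbb N}$, $(B_d)_{d\in\mathbb N}$ be positive numbers satisfying \[ \lim_{d\to\infty}\; \min\left\{ A_{d} \, \sqrt{d} \,L_{K_d},\; B_{d} \, d \,L_{K_d}^2\right\} \,=\, 0. \] Then \[ \lim_{d\to\infty}\, \sup_{f\in \mathscr C^1_d(A_d,B_d,K_d)}\, \left| \int_{K_d} f(x)\,dx \,-\, f(0) \right| \,=\, 0. \] In particular, the curse of dimensionality does not hold for the classes $\mathscr C^1_d(A_d,B_d,K_d)$.
   Context: A convex body $K\subseteq\mathbb R^d$ is a compact convex set with non-empty interior. $K$ is isotropic if $\mathrm{vol}_d(K)=1$, $\int_K x\,dx=0$, and there is $L_K\in(0,\infty)$ (the isotropic constant) with $\int_K\langle x,\theta\rangle^2\,dx=L_K^2$ for all $\theta\in\mathbb S^{d-1}$. For $g$ defined on $K_d$, $\mathrm{Lip}(g)=\sup_{x\ne y\in K_d}|g(x)-g(y)|/\|x-y\|_2$, and $D^\theta$ denotes the directional derivative in direction $\theta$. For $A,B>0$, $\mathscr C^1_d(A,B,K_d)=\{f\in\mathscr C^1(K_d): \|f\|_\infty\le1,\ \mathrm{Lip}(f)\le A,\ \mathrm{Lip}(D^\theta f)\le B \text{ for all }\theta\in\mathbb S^{d-1}\}$. Integration problem: approximate $S_d(f)=\int_{K_d}f(x)\,dx$ for $f\in\mathscr F_d$ by algorithms $A_{n,d}(f)=\phi_{n,d}(f(x_1),\dots,f(x_n))$,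 where $\phi_{n,d}:\mathbb R^n\to\mathbb R$ is arbitrary and the points $x_j\in K_d$ may be chosen adaptively. The worst-case error is $e(A_{n,d})=\sup_{f\in\mathscr F_d}|S_d(f)-A_{n,d}(f)|$, and the information complexity $n(\varepsilon,\mathscr F_d)$ is the minimal $n$ for which some such algorithm has $e(A_{n,d})\le\varepsilon$. The curse of dimensionality holds for $(\mathscr F_d)$ if there are $c,\varepsilon_0,\gamma>0$ with $n(\varepsilon,\mathscr F_d)\ge c(1+\gamma)^d$ for all $\varepsilon\le\varepsilon_0$ and infinitely many $d\in\mathbb N$. *)

theory Defs
  imports "HOL-Analysis.Analysis" "HOL-Probability.Probability"
begin

text \<open>Points of R^d are represented as extensional functions on the index set {..<d},
  i.e. the space of the product measure PiM {..<d} (\<lambda>_. lborel).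
  The topology used by compact is the product topology on nat => real, which on this
  carrier coincides with the Euclidean topology of R^d.\<close>

definition Rd :: "nat \<Rightarrow> (nat \<Rightarrow> real) set" where
  "Rd d = ({..<d} \<rightarrow>\<^sub>E (UNIV :: real set))"

definition lebd :: "nat \<Rightarrow> (nat \<Rightarrow> real) measure" where
  "lebd d = PiM {..<d} (\<lambda>_. lborel)"

definition zerod :: "nat \<Rightarrow> nat \<Rightarrow> real" where
  "zerod d = (\<lambda>i\<in>{..<d}. 0)"

definition vaddd :: "nat \<Rightarrow> (nat \<Rightarrow> real) \<Rightarrow> (nat \<Rightarrow> real) \<Rightarrow> nat \<Rightarrow> real" where
  "vaddd d x y = (\<lambda>i\<in>{..<d}. x i + y i)"

definition vdiffd :: "nat \<Rightarrow> (nat \<Rightarrow> real) \<Rightarrow> (nat \<Rightarrow> real) \<Rightarrow> nat \<Rightarrow> real" where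
  "vdiffd d x y = (\<lambda>i\<in>{..<d}. x i - y i)"

definition scaled :: "nat \<Rightarrow> real \<Rightarrow> (nat \<Rightarrow> real) \<Rightarrow> nat \<Rightarrow> real" where
  "scaled d t x = (\<lambda>i\<in>{..<d}. t * x i)"

definition innerd :: "nat \<Rightarrow> (nat \<Rightarrow> real) \<Rightarrow> (nat \<Rightarrow> real) \<Rightarrow> real" where
  "innerd d x y = (\<Sum>i<d. x i * y i)"

definition normd :: "nat \<Rightarrow> (nat \<Rightarrow> real) \<Rightarrow> real" where
  "normd d x = sqrt (innerd d x x)"

definition sphered :: "nat \<Rightarrow> (nat \<Rightarrow> real) set" where
  "sphered d = {\<theta> \<in> Rd d. normd d \<theta> = 1}"

definition convexd :: "nat \<Rightarrow> (nat \<Rightarrow> real) set \<Rightarrow> bool" where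
  "convexd d K \<longleftrightarrow> (\<forall>x\<in>K. \<forall>y\<in>K. \<forall>t::real. 0 \<le> t \<and> t \<le> 1 \<longrightarrow>
      vaddd d (scaled d (1 - t) x) (scaled d t y) \<in> K)"

definition convex_body :: "nat \<Rightarrow> (nat \<Rightarrow> real) set \<Rightarrow> bool" where
  "convex_body d K \<longleftrightarrow> K \<subseteq> Rd d \<and> compact K \<and> convexd d K \<and>
     (\<exists>x\<in>Rd d. \<exists>r>0. {y \<in> Rd d. normd d (vdiffd d y x) < r} \<subseteq> K)"

definition isotropic :: "nat \<Rightarrow> (nat \<Rightarrow> real) set \<Rightarrow> bool" where
  "isotropic d K \<longleftrightarrow> convex_body d K \<and> measure (lebd d) K = 1 \<and>
     (\<forall>i<d. (LINT x:K|lebd d. x i) = 0) \<and>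
     (\<exists>L>0. \<forall>\<theta>\<in>sphered d. (LINT x:K|lebd d. (innerd d x \<theta>)\<^sup>2) = L\<^sup>2)"

definition iso_const :: "nat \<Rightarrow> (nat \<Rightarrow> real) set \<Rightarrow> real" where
  "iso_const d K = (THE L. L > 0 \<and> (\<forall>\<theta>\<in>sphered d. (LINT x:K|lebd d. (innerd d x \<theta>)\<^sup>2) = L\<^sup>2))"

text \<open>g is the gradient of f on K (differentiability relative to K), so that the
  directional derivative is D^theta f (x) = innerd d (g x) theta.\<close>
definition is_grad_on :: "nat \<Rightarrow> (nat \<Rightarrow> real) set \<Rightarrow> ((nat \<Rightarrow> real) \<Rightarrow> real)
     \<Rightarrow> ((nat \<Rightarrow> real) \<Rightarrow> nat \<Rightarrow> real) \<Rightarrow> bool" where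
  "is_grad_on d K f g \<longleftrightarrow> (\<forall>x\<in>K. g x \<in> Rd d \<and>
     (\<forall>e>0. \<exists>\<delta>>0. \<forall>y\<in>K. normd d (vdiffd d y x) < \<delta> \<longrightarrow>
        \<bar>f y - f x - innerd d (g x) (vdiffd d y x)\<bar> \<le> e * normd d (vdiffd d y x)))"

definition C1_on :: "nat \<Rightarrow> (nat \<Rightarrow> real) set \<Rightarrow> ((nat \<Rightarrow> real) \<Rightarrow> real)
     \<Rightarrow> ((nat \<Rightarrow> real) \<Rightarrow> nat \<Rightarrow> real) \<Rightarrow> bool" where
  "C1_on d K f g \<longleftrightarrow> is_grad_on d K f g \<and>
     (\<forall>x\<in>K. \<forall>e>0. \<exists>\<delta>>0. \<forall>y\<in>K. normd d (vdiffd d y x) < \<delta> \<longrightarrow>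
        normd d (vdiffd d (g y) (g x)) < e)"

definition lip_le :: "nat \<Rightarrow> (nat \<Rightarrow> real) set \<Rightarrow> ((nat \<Rightarrow> real) \<Rightarrow> real) \<Rightarrow> real \<Rightarrow> bool" where
  "lip_le d K h c \<longleftrightarrow> (\<forall>x\<in>K. \<forall>y\<in>K. \<bar>h x - h y\<bar> \<le> c * normd d (vdiffd d x y))"

definition C1class :: "nat \<Rightarrow> real \<Rightarrow> real \<Rightarrow> (nat \<Rightarrow> real) set \<Rightarrow> ((nat \<Rightarrow> real) \<Rightarrow> real) set" where
  "C1class d A B K = {f. \<exists>g. C1_on d K f g \<and> (\<forall>x\<in>K. \<bar>f x\<bar> \<le> 1) \<and> lip_le d K f A \<and>
       (\<forall>\<theta>\<in>sphered d. lip_le d K (\<lambda>x. innerd d (g x) \<theta>) B)}"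

text \<open>Adaptive information: the j-th point is chosen from the previously observed values.\<close>
fun info_vals :: "(nat \<Rightarrow> real list \<Rightarrow> (nat \<Rightarrow> real)) \<Rightarrow> ((nat \<Rightarrow> real) \<Rightarrow> real) \<Rightarrow> nat \<Rightarrow> real list" where
  "info_vals pts f 0 = []"
| "info_vals pts f (Suc j) = info_vals pts f j @ [f (pts j (info_vals pts f j))]"

definition achievable :: "(nat \<Rightarrow> real) set \<Rightarrow> ((nat \<Rightarrow> real) \<Rightarrow> real) set
     \<Rightarrow> (((nat \<Rightarrow> real) \<Rightarrow> real) \<Rightarrow> real) \<Rightarrow> nat \<Rightarrow> real \<Rightarrow> bool" where
  "achievable K F S n eps \<longleftrightarrow> (\<exists>pts phi. (\<forall>j<n. \<forall>vs. pts j vs \<in> K) \<and>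
     (\<forall>f\<in>F. \<bar>S f - phi (info_vals pts f n)\<bar> \<le> eps))"

definition curse :: "(nat \<Rightarrow> (nat \<Rightarrow> real) set) \<Rightarrow> (nat \<Rightarrow> ((nat \<Rightarrow> real) \<Rightarrow> real) set)
     \<Rightarrow> (nat \<Rightarrow> ((nat \<Rightarrow> real) \<Rightarrow> real) \<Rightarrow> real) \<Rightarrow> bool" where
  "curse K F S \<longleftrightarrow> (\<exists>c>0. \<exists>eps0>0. \<exists>\<gamma>>0. \<forall>eps. 0 < eps \<and> eps \<le> eps0 \<longrightarrow>
      infinite {d. \<forall>n. achievable (K d) (F d) (S d) n eps \<longrightarrow> c * (1 + \<gamma>) ^ d \<le> real n})"

end

theory Submission
  imports Defs
begin

text \<open>For an isotropic body K the centroid 0 lies in K and \<integral>_K |x|^2 = d L_K^2. If Lip f \<le> A, then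
  |\<integral>_K f - f 0| \<le> A \<integral>_K |x| \<le> A sqrt d L_K. If all directional derivatives are B-Lipschitz, the
  mean value theorem along the ray from 0 gives |f x - f 0 - \<langle>\<nabla>f 0, x\<rangle>| \<le> B |x|^2, and the linear
  term integrates to 0, so |\<integral>_K f - f 0| \<le> B d L_K^2. Hence the one-point rule f \<mapsto> f 0 has worst-case
  error tending to 0: for every fixed accuracy a single function value suffices in all large
  dimensions, which excludes the curse of dimensionality.\<close>

lemma innerd_nonneg: "innerd d x x \<ge> 0"
  unfolding innerd_def by (auto intro!: sum_nonneg)

lemma normd_nonneg: "normd d x \<ge> 0"
  unfolding normd_def using innerd_nonneg by simp

lemma normd_power2: "(normd d x)\<^sup>2 = innerd d x x"
  unfolding normd_def using innerd_nonneg by simp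

lemma normd_vdiffd: "normd d (vdiffd d x y) = sqrt (\<Sum>i<d. (x i - y i) * (x i - y i))"
  unfolding normd_def innerd_def vdiffd_def by simp

lemma innerd_zerod_right: "innerd d v (zerod d) = 0"
  unfolding innerd_def zerod_def by simp

lemma innerd_zerod_left: "innerd d (zerod d) v = 0"
  unfolding innerd_def zerod_def by simp

lemma innerd_scaled_right: "innerd d v (scaled d c x) = c * innerd d v x"
  unfolding innerd_def scaled_def by (simp add: sum_distrib_left algebra_simps)

lemma innerd_vdiffd_scaled: "innerd d v (vdiffd d (scaled d s x) (scaled d t x)) = (s - t) * innerd d v x"
  unfolding innerd_def scaled_def vdiffd_def by (simp add: sum_distrib_left algebra_simps)

lemma normd_scaled: "normd d (scaled d c x) = \<bar>c\<bar> * normd d x"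
proof -
  have "innerd d (scaled d c x) (scaled d c x) = c\<^sup>2 * innerd d x x"
    unfolding innerd_def scaled_def by (simp add: sum_distrib_left power2_eq_square algebra_simps)
  then show ?thesis unfolding normd_def by (simp add: real_sqrt_mult)
qed

lemma normd_vdiffd_scaled: "normd d (vdiffd d (scaled d s x) (scaled d t x)) = \<bar>s - t\<bar> * normd d x"
proof -
  have "innerd d (vdiffd d (scaled d s x) (scaled d t x)) (vdiffd d (scaled d s x) (scaled d t x))
      = (s - t)\<^sup>2 * innerd d x x"
    unfolding innerd_def scaled_def vdiffd_def
    by (simp add: sum_distrib_left) (simp add: power2_eq_square algebra_simps)
  then show ?thesis unfolding normd_def by (simp add: real_sqrt_mult)
qed

lemma normd_vdiffd_zerod: "normd d (vdiffd d x (zerod d)) = normd d x"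
  unfolding normd_def innerd_def zerod_def vdiffd_def by simp

lemma zerod_in_Rd: "zerod d \<in> Rd d"
  unfolding zerod_def Rd_def by auto

lemma scaled_in_Rd: "scaled d c x \<in> Rd d"
  unfolding scaled_def Rd_def by auto

lemma scaled_one: "x \<in> Rd d \<Longrightarrow> scaled d 1 x = x"
  unfolding scaled_def Rd_def by (auto simp: fun_eq_iff PiE_def extensional_def)

lemma scaled_zero: "scaled d 0 x = zerod d"
  unfolding scaled_def zerod_def by simp

lemma normd_eq_0_imp_zerod:
  assumes "x \<in> Rd d" "normd d x = 0"
  shows "x = zerod d"
proof -
  have "innerd d x x = 0" using assms(2) normd_power2[of d x] by simp
  then have "\<forall>i\<in>{..<d}. x i * x i = 0"
    unfolding innerd_def by (subst sum_nonneg_eq_0_iff[symmetric]) auto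
  then show ?thesis using assms(1) unfolding zerod_def Rd_def
    by (auto simp: fun_eq_iff PiE_def extensional_def)
qed

lemma innerd_convex_comb_self:
  "innerd d (vaddd d (scaled d (1 - t) p) (scaled d t x)) (vaddd d (scaled d (1 - t) p) (scaled d t x))
   = innerd d p p + 2 * t * (innerd d p x - innerd d p p) + t\<^sup>2 * (\<Sum>i<d. (x i - p i)\<^sup>2)"
proof -
  have "innerd d (vaddd d (scaled d (1 - t) p) (scaled d t x)) (vaddd d (scaled d (1 - t) p) (scaled d t x))
     = (\<Sum>i<d. p i * p i + 2 * t * (p i * x i - p i * p i) + t\<^sup>2 * (x i - p i)\<^sup>2)"
    unfolding innerd_def vaddd_def scaled_def
    by (rule sum.cong) (simp_all add: power2_eq_square algebra_simps)
  also have "\<dots> = innerd d p p + 2 * t * (innerd d p x - innerd d p p) + t\<^sup>2 * (\<Sum>i<d. (x i - p i)\<^sup>2)"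
    unfolding innerd_def by (simp add: sum.distrib sum_subtractf flip: sum_distrib_left)
  finally show ?thesis .
qed

lemma scaled_mem_convexd:
  assumes "convexd d K" "zerod d \<in> K" "x \<in> K" "0 \<le> t" "t \<le> 1"
  shows "scaled d t x \<in> K"
proof -
  have "vaddd d (scaled d (1 - t) (zerod d)) (scaled d t x) = scaled d t x"
    unfolding vaddd_def scaled_def zerod_def by (auto simp: fun_eq_iff)
  then show ?thesis using assms unfolding convexd_def by metis
qed

definition unitv :: "nat \<Rightarrow> nat \<Rightarrow> nat \<Rightarrow> real" where
  "unitv d i = (\<lambda>j\<in>{..<d}. if j = i then 1 else 0)"

lemma innerd_unitv: "i < d \<Longrightarrow> innerd d x (unitv d i) = x i"
proof -
  assume "i < d"
  have "innerd d x (unitv d i) = (\<Sum>j<d. if j = i then x i else 0)"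
    unfolding innerd_def unitv_def by (rule sum.cong) auto
  then show ?thesis using \<open>i < d\<close> by simp
qed

lemma unitv_in_sphered: "i < d \<Longrightarrow> unitv d i \<in> sphered d"
  using innerd_unitv[of i d "unitv d i"] unfolding sphered_def normd_def by (auto simp: Rd_def unitv_def)

lemma continuous_on_coordinate [continuous_intros]: "continuous_on S (\<lambda>x::nat\<Rightarrow>real. x i)"
  by (rule continuous_on_subset[OF continuous_on_product_coordinates]) simp

lemma continuous_on_normd_vdiffd: "continuous_on S (\<lambda>x. normd d (vdiffd d x y))"
  unfolding normd_vdiffd by (intro continuous_intros)

lemma continuous_on_innerd_self: "continuous_on S (\<lambda>x. innerd d x x)"
  unfolding innerd_def by (intro continuous_intros)

lemma continuous_on_innerd_right: "continuous_on S (\<lambda>x. innerd d p x)"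
  unfolding innerd_def by (intro continuous_intros)

lemma lip_le_continuous_on:
  assumes "lip_le d K f A"
  shows "continuous_on K f"
  unfolding continuous_on_def
proof
  fix y assume y: "y \<in> K"
  have "((\<lambda>x. A * normd d (vdiffd d x y)) \<longlongrightarrow> A * normd d (vdiffd d y y)) (at y within K)"
    using continuous_on_normd_vdiffd[of K d y] y unfolding continuous_on_def
    by (intro tendsto_mult tendsto_const) auto
  then have to_0: "((\<lambda>x. A * normd d (vdiffd d x y)) \<longlongrightarrow> 0) (at y within K)"
    by (simp add: normd_vdiffd)
  have "eventually (\<lambda>x. norm (f x - f y) \<le> A * normd d (vdiffd d x y)) (at y within K)"
    using assms y unfolding eventually_at_filter lip_le_def by simp
  from Lim_null_comparison[OF this to_0]
  have "((\<lambda>x. (f x - f y) + f y) \<longlongrightarrow> 0 + f y) (at y within K)"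
    by (intro tendsto_add tendsto_const)
  then show "(f \<longlongrightarrow> f y) (at y within K)" by simp
qed

lemma space_lebd: "space (lebd d) = Rd d"
  unfolding lebd_def Rd_def by (simp add: space_PiM)

lemma id_borel_measurable_lebd: "(\<lambda>x::nat\<Rightarrow>real. x) \<in> borel_measurable (lebd d)"
proof (rule measurable_coordinatewise_then_product)
  fix i
  show "(\<lambda>x::nat\<Rightarrow>real. x i) \<in> borel_measurable (lebd d)"
  proof (cases "i < d")
    case True
    then have "(\<lambda>x::nat\<Rightarrow>real. x i) \<in> measurable (lebd d) lborel"
      unfolding lebd_def by (intro measurable_component_singleton) simp
    then show ?thesis by (simp add: measurable_lborel1)
  next
    case False
    then have "x i = undefined" if "x \<in> space (lebd d)" for x :: "nat \<Rightarrow> real"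
      using that unfolding space_lebd Rd_def by (auto simp: PiE_def extensional_def)
    then show ?thesis using measurable_cong[of "lebd d" "\<lambda>x. x i" "\<lambda>_. undefined"] by simp
  qed
qed

lemma continuous_on_borel_measurable_restrict_lebd:
  assumes "continuous_on K (h :: (nat\<Rightarrow>real) \<Rightarrow> real)"
  shows "h \<in> borel_measurable (restrict_space (lebd d) K)"
proof -
  have "(\<lambda>x. x) \<in> measurable (restrict_space (lebd d) K) (restrict_space borel K)"
    by (rule measurable_restrict_space3[OF id_borel_measurable_lebd]) auto
  from measurable_comp[OF this borel_measurable_continuous_on_restrict[OF assms]]
  show ?thesis by (simp add: o_def)
qed

lemma measure_lebd_eq_1_imp_sets: "measure (lebd d) K = 1 \<Longrightarrow> K \<in> sets (lebd d)"
  using measure_notin_sets by fastforce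

lemma prob_space_restrict_lebd:
  assumes "measure (lebd d) K = 1"
  shows "prob_space (restrict_space (lebd d) K)"
proof (rule prob_space_restrict_space)
  show "K \<in> sets (lebd d)" using measure_lebd_eq_1_imp_sets[OF assms] .
  have "emeasure (lebd d) K \<noteq> \<infinity>"
    using assms by (auto simp: measure_def)
  then show "emeasure (lebd d) K = 1"
    using emeasure_eq_ennreal_measure[of "lebd d" K] assms by simp
qed

lemma space_restrict_lebd: "measure (lebd d) K = 1 \<Longrightarrow> space (restrict_space (lebd d) K) = K"
  using measure_lebd_eq_1_imp_sets by simp

lemma set_integral_eq_restrict_lebd:
  assumes "measure (lebd d) K = 1"
  shows "(LINT x:K|lebd d. h x) = integral\<^sup>L (restrict_space (lebd d) K) (h :: _ \<Rightarrow> real)"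
proof -
  have "K \<inter> space (lebd d) \<in> sets (lebd d)"
    using measure_lebd_eq_1_imp_sets[OF assms] by (simp add: sets.Int_space_eq2)
  then show ?thesis unfolding set_lebesgue_integral_def by (simp add: integral_restrict_space)
qed

lemma continuous_on_integrable_restrict_lebd:
  assumes "measure (lebd d) K = 1" "compact K" "continuous_on K h"
  shows "integrable (restrict_space (lebd d) K) (h :: _ \<Rightarrow> real)"
proof -
  interpret prob_space "restrict_space (lebd d) K" using prob_space_restrict_lebd[OF assms(1)] .
  have "bounded (h ` K)" using compact_continuous_image[OF assms(3,2)] compact_imp_bounded by blast
  then obtain C where C: "\<forall>x\<in>K. \<bar>h x\<bar> \<le> C" unfolding bounded_real by auto
  show ?thesis
  proof (rule integrable_const_bound[where B = C])
    show "AE x in restrict_space (lebd d) K. norm (h x) \<le> C"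
      using C space_restrict_lebd[OF assms(1)] by (intro AE_I2) simp
    show "h \<in> borel_measurable (restrict_space (lebd d) K)"
      by (rule continuous_on_borel_measurable_restrict_lebd[OF assms(3)])
  qed
qed

lemma abs_integral_le_integral:
  fixes f g :: "'a \<Rightarrow> real"
  assumes "integrable M f" "integrable M g" "\<And>x. x \<in> space M \<Longrightarrow> \<bar>f x\<bar> \<le> g x"
  shows "\<bar>integral\<^sup>L M f\<bar> \<le> integral\<^sup>L M g"
proof -
  have "\<bar>integral\<^sup>L M f\<bar> \<le> (\<integral>x. \<bar>f x\<bar> \<partial>M)"
    using integral_norm_bound[of M f] by simp
  also have "\<dots> \<le> integral\<^sup>L M g"
    using assms by (intro integral_mono) auto
  finally show ?thesis .
qed

section \<open>Isotropic bodies\<close>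

lemma nearest_point_innerd_ge:
  assumes "convexd d K" "p \<in> K" "\<forall>y\<in>K. innerd d p p \<le> innerd d y y" "x \<in> K"
  shows "innerd d p p \<le> innerd d p x"
proof (rule ccontr)
  define a where "a = innerd d p x - innerd d p p"
  define b where "b = (\<Sum>i<d. (x i - p i)\<^sup>2)"
  assume "\<not> innerd d p p \<le> innerd d p x"
  then have a: "a < 0" unfolding a_def by simp
  have b: "b \<ge> 0" unfolding b_def by (intro sum_nonneg) simp
  define t where "t = min 1 (- a / (b + 1))"
  have t: "0 < t" "t \<le> 1" unfolding t_def using a b by (simp_all add: divide_neg_pos)
  have "t * b \<le> (- a / (b + 1)) * b" unfolding t_def using b by (intro mult_right_mono) auto
  also have "\<dots> < - a" using a b by (simp add: field_simps)
  finally have tb: "t * b < - a" .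
  have "vaddd d (scaled d (1 - t) p) (scaled d t x) \<in> K"
    using assms t unfolding convexd_def by simp
  then have "innerd d p p \<le> innerd d p p + 2 * t * a + t\<^sup>2 * b"
    using assms(3) innerd_convex_comb_self[of d t p x] unfolding a_def b_def by fastforce
  then have "0 \<le> t * (2 * a + t * b)" by (simp add: power2_eq_square algebra_simps)
  then have "0 \<le> 2 * a + t * b" using t by (simp add: zero_le_mult_iff)
  then show False using tb a by linarith
qed

lemma centred_integral_innerd:
  assumes "measure (lebd d) K = 1" "compact K" "\<forall>i<d. (LINT x:K|lebd d. x i) = 0"
  shows "(LINT x:K|lebd d. innerd d c x) = 0"
proof -
  have "integrable (restrict_space (lebd d) K) (\<lambda>x. x i)" for i
    by (rule continuous_on_integrable_restrict_lebd[OF assms(1,2)]) (intro continuous_intros)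
  then show ?thesis
    using assms(3) unfolding set_integral_eq_restrict_lebd[OF assms(1)] innerd_def
    by (simp add: integral_sum)
qed

text \<open>If 0 \<notin> K, the point p of K closest to 0 satisfies \<langle>p, x\<rangle> \<ge> |p|^2 > 0 on K, while the
  centring gives \<integral>_K \<langle>p, x\<rangle> = 0.\<close>

lemma zerod_mem_centred_convexd:
  assumes K: "K \<subseteq> Rd d" "compact K" "convexd d K" "measure (lebd d) K = 1"
    and centred: "\<forall>i<d. (LINT x:K|lebd d. x i) = 0"
  shows "zerod d \<in> K"
proof (rule ccontr)
  assume "zerod d \<notin> K"
  have "K \<noteq> {}" using K(4) by auto
  then obtain p where p: "p \<in> K" "\<forall>y\<in>K. innerd d p p \<le> innerd d y y"
    using continuous_attains_inf[OF K(2) _ continuous_on_innerd_self] by blast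
  have "innerd d p p \<noteq> 0"
    using normd_eq_0_imp_zerod[of p d] p K(1) \<open>zerod d \<notin> K\<close> unfolding normd_def by auto
  then have pos: "innerd d p p > 0" using innerd_nonneg[of d p] by linarith
  interpret N: prob_space "restrict_space (lebd d) K" using prob_space_restrict_lebd[OF K(4)] .
  have "integral\<^sup>L (restrict_space (lebd d) K) (\<lambda>x. innerd d p p)
      \<le> integral\<^sup>L (restrict_space (lebd d) K) (\<lambda>x. innerd d p x)"
    using nearest_point_innerd_ge[OF K(3) p] space_restrict_lebd[OF K(4)]
      continuous_on_integrable_restrict_lebd[OF K(4,2) continuous_on_innerd_right]
    by (intro integral_mono) auto
  also have "\<dots> = 0"
    using centred_integral_innerd[OF K(4,2) centred] set_integral_eq_restrict_lebd[OF K(4)] by simp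
  finally show False using pos by (simp add: N.prob_space)
qed

lemma iso_const_eqI:
  assumes "d \<ge> 1" "L > 0" "\<forall>\<theta>\<in>sphered d. (LINT x:K|lebd d. (innerd d x \<theta>)\<^sup>2) = L\<^sup>2"
  shows "iso_const d K = L"
  unfolding iso_const_def
proof (rule the_equality)
  fix L' assume L': "L' > 0 \<and> (\<forall>\<theta>\<in>sphered d. (LINT x:K|lebd d. (innerd d x \<theta>)\<^sup>2) = L'\<^sup>2)"
  have "unitv d 0 \<in> sphered d" using assms(1) by (intro unitv_in_sphered) simp
  then have "L'\<^sup>2 = L\<^sup>2" using L' assms(3) by metis
  then show "L' = L" using L' assms(2) by (simp add: power2_eq_iff_nonneg)
qed (use assms in blast)

lemma isotropic_D:
  assumes "isotropic d K" "d \<ge> 1"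
  shows "K \<subseteq> Rd d" "compact K" "convexd d K" "measure (lebd d) K = 1" "zerod d \<in> K"
    "\<forall>i<d. (LINT x:K|lebd d. x i) = 0" "iso_const d K > 0"
    "(LINT x:K|lebd d. innerd d x x) = real d * (iso_const d K)\<^sup>2"
proof -
  show K: "K \<subseteq> Rd d" "compact K" "convexd d K" "measure (lebd d) K = 1"
    and centred: "\<forall>i<d. (LINT x:K|lebd d. x i) = 0"
    using assms(1) unfolding isotropic_def convex_body_def by auto
  show "zerod d \<in> K" using zerod_mem_centred_convexd[OF K centred] .
  obtain L where L: "L > 0" "\<forall>\<theta>\<in>sphered d. (LINT x:K|lebd d. (innerd d x \<theta>)\<^sup>2) = L\<^sup>2"
    using assms(1) unfolding isotropic_def by blast
  have L_eq: "iso_const d K = L" using iso_const_eqI[OF assms(2) L] .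
  then show "iso_const d K > 0" using L by simp
  have "integrable (restrict_space (lebd d) K) (\<lambda>x. x i * x i)" for i
    by (rule continuous_on_integrable_restrict_lebd[OF K(4,2)]) (intro continuous_intros)
  then have "(LINT x:K|lebd d. innerd d x x) = (\<Sum>i<d. LINT x:K|lebd d. x i * x i)"
    unfolding set_integral_eq_restrict_lebd[OF K(4)] innerd_def by (simp add: integral_sum)
  also have "\<dots> = (\<Sum>i<d. LINT x:K|lebd d. (innerd d x (unitv d i))\<^sup>2)"
    by (intro sum.cong) (simp_all add: innerd_unitv power2_eq_square)
  also have "\<dots> = real d * (iso_const d K)\<^sup>2"
    using L(2) unitv_in_sphered L_eq by simp
  finally show "(LINT x:K|lebd d. innerd d x x) = real d * (iso_const d K)\<^sup>2" .
qed

section \<open>Error of the one-point rule\<close>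

lemma has_field_derivative_along_ray:
  assumes grad: "is_grad_on d K f g"
    and ray: "\<And>s. s \<in> {0..1} \<Longrightarrow> scaled d s x \<in> K"
    and t: "t \<in> {0..1}"
  shows "((\<lambda>s. f (scaled d s x)) has_field_derivative innerd d (g (scaled d t x)) x) (at t within {0..1})"
  unfolding has_field_derivative_def has_derivative_within_alt
proof (intro conjI allI impI)
  define y where "y = scaled d t x"
  define n where "n = normd d x"
  have n0: "n \<ge> 0" unfolding n_def by (rule normd_nonneg)
  show "bounded_linear ((*) (innerd d (g y) x))" by (rule bounded_linear_mult_right)
  fix e :: real assume e: "e > 0"
  then obtain \<delta> where \<delta>: "\<delta> > 0" and
    near: "\<forall>z\<in>K. normd d (vdiffd d z y) < \<delta> \<longrightarrow>
      \<bar>f z - f y - innerd d (g y) (vdiffd d z y)\<bar> \<le> e / (n + 1) * normd d (vdiffd d z y)"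
    using grad ray[OF t] n0 unfolding is_grad_on_def y_def
    by (metis add_nonneg_pos divide_pos_pos zero_less_one)
  show "\<exists>\<delta>'>0. \<forall>s\<in>{0..1}. norm (s - t) < \<delta>' \<longrightarrow>
      norm (f (scaled d s x) - f (scaled d t x) - innerd d (g (scaled d t x)) x * (s - t))
        \<le> e * norm (s - t)"
  proof (intro exI[of _ "\<delta> / (n + 1)"] conjI ballI impI)
    show "\<delta> / (n + 1) > 0" using \<delta> n0 by simp
    fix s :: real assume s: "s \<in> {0..1}" and st: "norm (s - t) < \<delta> / (n + 1)"
    have dist: "normd d (vdiffd d (scaled d s x) y) = \<bar>s - t\<bar> * n"
      unfolding y_def n_def by (rule normd_vdiffd_scaled)
    have "\<bar>s - t\<bar> * n \<le> \<bar>s - t\<bar> * (n + 1)" by (intro mult_left_mono) simp_all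
    also have "\<dots> < \<delta>" using st n0 by (simp add: field_simps)
    finally have "normd d (vdiffd d (scaled d s x) y) < \<delta>" unfolding dist .
    with near ray[OF s] have "\<bar>f (scaled d s x) - f y - innerd d (g y) (vdiffd d (scaled d s x) y)\<bar>
        \<le> e / (n + 1) * normd d (vdiffd d (scaled d s x) y)" by blast
    then have "\<bar>f (scaled d s x) - f y - (s - t) * innerd d (g y) x\<bar> \<le> e / (n + 1) * (\<bar>s - t\<bar> * n)"
      unfolding dist unfolding y_def innerd_vdiffd_scaled .
    also have "\<dots> = e * \<bar>s - t\<bar> * (n / (n + 1))" by simp
    also have "\<dots> \<le> e * \<bar>s - t\<bar>" using e n0 by (intro mult_left_le) auto
    finally show "norm (f (scaled d s x) - f (scaled d t x) - innerd d (g (scaled d t x)) x * (s - t))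
        \<le> e * norm (s - t)" unfolding y_def
      by (simp only: real_norm_def mult.commute[of "innerd d (g (scaled d t x)) x"])
  qed
qed

lemma taylor_bound_Lip_directional_derivatives:
  assumes K: "K \<subseteq> Rd d" "convexd d K" "zerod d \<in> K"
    and grad: "is_grad_on d K f g"
    and lip: "\<forall>\<theta>\<in>sphered d. lip_le d K (\<lambda>x. innerd d (g x) \<theta>) B"
    and B: "B \<ge> 0" and x: "x \<in> K"
  shows "\<bar>f x - f (zerod d) - innerd d (g (zerod d)) x\<bar> \<le> B * (normd d x)\<^sup>2"
proof -
  define n where "n = normd d x"
  have n0: "n \<ge> 0" unfolding n_def by (rule normd_nonneg)
  have ray: "scaled d s x \<in> K" if "s \<in> {0..1}" for s
    using scaled_mem_convexd[OF K(2,3) x] that by auto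
  have slope: "\<bar>innerd d (g (scaled d t x)) x - innerd d (g (zerod d)) x\<bar> \<le> B * n\<^sup>2"
    if t: "t \<in> {0..1}" for t
  proof (cases "n = 0")
    case True
    then have "x = zerod d" using normd_eq_0_imp_zerod K(1) x unfolding n_def by blast
    then show ?thesis using B by (simp add: innerd_zerod_right)
  next
    case False
    then have n_pos: "n > 0" using n0 by simp
    define \<theta> where "\<theta> = scaled d (1 / n) x"
    have \<theta>: "\<theta> \<in> sphered d"
      using scaled_in_Rd normd_scaled[of d "1/n" x] n_pos unfolding sphered_def \<theta>_def n_def by simp
    have "\<bar>innerd d (g (scaled d t x)) \<theta> - innerd d (g (zerod d)) \<theta>\<bar>
        \<le> B * normd d (vdiffd d (scaled d t x) (zerod d))"
      using lip \<theta> ray[OF t] K(3) unfolding lip_le_def by blast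
    also have "\<dots> \<le> B * n"
      using t B n0 unfolding normd_vdiffd_zerod normd_scaled n_def
      by (intro mult_left_mono) (auto intro: mult_left_le_one_le)
    finally show ?thesis
      using n_pos unfolding \<theta>_def innerd_scaled_right
      by (simp add: abs_mult field_simps power2_eq_square)
  qed
  define \<phi> where "\<phi> s = f (scaled d s x) - s * innerd d (g (zerod d)) x" for s
  have "((\<lambda>s. f (scaled d s x) - s * innerd d (g (zerod d)) x) has_field_derivative
      innerd d (g (scaled d t x)) x - 1 * innerd d (g (zerod d)) x) (at t within {0..1})"
    if "t \<in> {0..1}" for t
    by (intro DERIV_diff DERIV_cmult_right DERIV_ident has_field_derivative_along_ray[OF grad ray that])
  then have "norm (\<phi> 1 - \<phi> 0) \<le> B * n\<^sup>2 * norm ((1::real) - 0)"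
    unfolding \<phi>_def by (intro field_differentiable_bound[of "{0..1}"]) (use slope in auto)
  then show ?thesis
    using scaled_one K(1) x unfolding \<phi>_def n_def by (auto simp: scaled_zero)
qed

text \<open>AM-GM replaces Cauchy-Schwarz: A |x| \<le> A (|x|^2 / (2 s) + s / 2) with s = sqrt d L_K, and the
  right-hand side integrates to A s.\<close>

lemma isotropic_one_point_error_Lip:
  assumes iso: "isotropic d K" and d: "d \<ge> 1" and A: "A \<ge> 0" and lip: "lip_le d K f A"
  shows "\<bar>(LINT x:K|lebd d. f x) - f (zerod d)\<bar> \<le> A * sqrt (real d) * iso_const d K"
proof -
  note K = isotropic_D[OF iso d]
  define N where "N = restrict_space (lebd d) K"
  interpret N: prob_space N unfolding N_def using prob_space_restrict_lebd[OF K(4)] .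
  have int: "integrable N h" if "continuous_on K h" for h :: "(nat \<Rightarrow> real) \<Rightarrow> real"
    unfolding N_def using continuous_on_integrable_restrict_lebd[OF K(4,2) that] .
  have LINT_N: "(LINT x:K|lebd d. h x) = integral\<^sup>L N h" for h :: "(nat \<Rightarrow> real) \<Rightarrow> real"
    unfolding N_def by (rule set_integral_eq_restrict_lebd[OF K(4)])
  have f_cont: "continuous_on K f" by (rule lip_le_continuous_on[OF lip])
  define s where "s = sqrt (real d) * iso_const d K"
  have s_pos: "s > 0" unfolding s_def using d K(7) by simp
  have s_sq: "s\<^sup>2 = real d * (iso_const d K)\<^sup>2" unfolding s_def by (simp add: power_mult_distrib)
  have pointwise: "\<bar>f x - f (zerod d)\<bar> \<le> A / (2 * s) * innerd d x x + A * s / 2" if x: "x \<in> K" for x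
  proof -
    have "\<bar>f x - f (zerod d)\<bar> \<le> A * normd d x"
      using lip x K(5) unfolding lip_le_def by (metis normd_vdiffd_zerod)
    also have "\<dots> \<le> A / (2 * s) * (normd d x)\<^sup>2 + A * s / 2"
    proof -
      have "0 \<le> A / (2 * s) * (normd d x - s)\<^sup>2" using A s_pos by simp
      also have "\<dots> = A / (2 * s) * (normd d x)\<^sup>2 + A * s / 2 - A * normd d x"
        using s_pos by (simp add: power2_eq_square field_simps)
      finally show ?thesis by simp
    qed
    finally show ?thesis by (simp add: normd_power2)
  qed
  have "\<bar>(LINT x:K|lebd d. f x) - f (zerod d)\<bar> = \<bar>integral\<^sup>L N (\<lambda>x. f x - f (zerod d))\<bar>"
    using int[OF f_cont] by (simp add: LINT_N N.prob_space)
  also have "\<dots> \<le> integral\<^sup>L N (\<lambda>x. A / (2 * s) * innerd d x x + A * s / 2)"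
    using pointwise N_def space_restrict_lebd[OF K(4)]
    by (intro abs_integral_le_integral int continuous_intros f_cont continuous_on_innerd_self) auto
  also have "\<dots> = A / (2 * s) * (real d * (iso_const d K)\<^sup>2) + A * s / 2"
    using K(8) int[OF continuous_on_innerd_self] by (simp add: LINT_N N.prob_space)
  also have "\<dots> = A * s" using s_pos unfolding s_sq[symmetric] by (simp add: power2_eq_square field_simps)
  finally show ?thesis unfolding s_def by (simp add: mult.assoc)
qed

lemma isotropic_one_point_error_Lip_grad:
  assumes iso: "isotropic d K" and d: "d \<ge> 1" and B: "B \<ge> 0"
    and f_cont: "continuous_on K f" and grad: "is_grad_on d K f g"
    and lip: "\<forall>\<theta>\<in>sphered d. lip_le d K (\<lambda>x. innerd d (g x) \<theta>) B"
  shows "\<bar>(LINT x:K|lebd d. f x) - f (zerod d)\<bar> \<le> B * real d * (iso_const d K)\<^sup>2"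
proof -
  note K = isotropic_D[OF iso d]
  define N where "N = restrict_space (lebd d) K"
  interpret N: prob_space N unfolding N_def using prob_space_restrict_lebd[OF K(4)] .
  have int: "integrable N h" if "continuous_on K h" for h :: "(nat \<Rightarrow> real) \<Rightarrow> real"
    unfolding N_def using continuous_on_integrable_restrict_lebd[OF K(4,2) that] .
  have LINT_N: "(LINT x:K|lebd d. h x) = integral\<^sup>L N h" for h :: "(nat \<Rightarrow> real) \<Rightarrow> real"
    unfolding N_def by (rule set_integral_eq_restrict_lebd[OF K(4)])
  define c where "c = g (zerod d)"
  have "\<bar>(LINT x:K|lebd d. f x) - f (zerod d)\<bar> = \<bar>integral\<^sup>L N (\<lambda>x. f x - f (zerod d) - innerd d c x)\<bar>"
    using int[OF f_cont] int[OF continuous_on_innerd_right] centred_integral_innerd[OF K(4,2,6)]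
    by (simp add: LINT_N N.prob_space)
  also have "\<dots> \<le> integral\<^sup>L N (\<lambda>x. B * innerd d x x)"
    using taylor_bound_Lip_directional_derivatives[OF K(1,3,5) grad lip B]
      N_def space_restrict_lebd[OF K(4)]
    by (intro abs_integral_le_integral int continuous_intros f_cont continuous_on_innerd_self
        continuous_on_innerd_right) (auto simp: c_def normd_power2)
  also have "\<dots> = B * real d * (iso_const d K)\<^sup>2"
    using K(8) by (simp add: LINT_N)
  finally show ?thesis .
qed

lemma C1class_one_point_error:
  assumes "isotropic d K" "d \<ge> 1" "A \<ge> 0" "B \<ge> 0" "f \<in> C1class d A B K"
  shows "\<bar>(LINT x:K|lebd d. f x) - f (zerod d)\<bar>
    \<le> min (A * sqrt (real d) * iso_const d K) (B * real d * (iso_const d K)\<^sup>2)"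
proof -
  obtain g where "is_grad_on d K f g" "lip_le d K f A"
      "\<forall>\<theta>\<in>sphered d. lip_le d K (\<lambda>x. innerd d (g x) \<theta>) B"
    using assms(5) unfolding C1class_def C1_on_def by blast
  then show ?thesis
    using assms(1-4) isotropic_one_point_error_Lip isotropic_one_point_error_Lip_grad
      lip_le_continuous_on by simp
qed

lemma zero_in_C1class:
  assumes "A \<ge> 0" "B \<ge> 0"
  shows "(\<lambda>_. 0) \<in> C1class d A B K"
proof -
  have "normd d (vdiffd d (zerod d) (zerod d)) = 0" by (simp add: normd_vdiffd)
  then have "C1_on d K (\<lambda>_. 0) (\<lambda>_. zerod d)"
    unfolding C1_on_def is_grad_on_def
    by (auto simp: innerd_zerod_left zerod_in_Rd intro!: exI[of _ 1] mult_nonneg_nonneg normd_nonneg)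
  then show ?thesis
    using assms normd_nonneg unfolding C1class_def lip_le_def by (auto simp: innerd_zerod_left)
qed

lemma SUP_abs_tendsto_0:
  fixes h :: "nat \<Rightarrow> 'a \<Rightarrow> real"
  assumes nonempty: "\<And>d. d \<ge> 1 \<Longrightarrow> F d \<noteq> {}"
    and bound: "\<And>d x. d \<ge> 1 \<Longrightarrow> x \<in> F d \<Longrightarrow> \<bar>h d x\<bar> \<le> m d"
    and m: "m \<longlonglongrightarrow> 0"
  shows "(\<lambda>d. SUP x\<in>F d. \<bar>h d x\<bar>) \<longlonglongrightarrow> 0"
proof (rule tendsto_sandwich[OF _ _ tendsto_const m])
  have SUP_bounds: "0 \<le> (SUP x\<in>F d. \<bar>h d x\<bar>) \<and> (SUP x\<in>F d. \<bar>h d x\<bar>) \<le> m d" if d: "d \<ge> 1" for d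
  proof
    obtain x0 where x0: "x0 \<in> F d" using nonempty[OF d] by blast
    have "bdd_above ((\<lambda>x. \<bar>h d x\<bar>) ` F d)" using bound[OF d] by (intro bdd_aboveI2)
    from cSUP_upper[OF x0 this] show "0 \<le> (SUP x\<in>F d. \<bar>h d x\<bar>)" by linarith
    show "(SUP x\<in>F d. \<bar>h d x\<bar>) \<le> m d" using nonempty[OF d] bound[OF d] by (intro cSUP_least) auto
  qed
  then show "\<forall>\<^sub>F d in sequentially. 0 \<le> (SUP x\<in>F d. \<bar>h d x\<bar>)"
    and "\<forall>\<^sub>F d in sequentially. (SUP x\<in>F d. \<bar>h d x\<bar>) \<le> m d"
    unfolding eventually_sequentially by blast+
qed

lemma achievable_one_point:
  assumes "z \<in> K" "\<forall>f\<in>F. \<bar>S f - f z\<bar> \<le> eps"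
  shows "achievable K F S 1 eps"
  unfolding achievable_def
  using assms by (intro exI[of _ "\<lambda>_ _. z"] exI[of _ hd]) simp

lemma not_curse_if_one_point_error_tendsto_0:
  assumes z: "\<And>d. d \<ge> 1 \<Longrightarrow> z d \<in> K d"
    and err: "\<And>d f. d \<ge> 1 \<Longrightarrow> f \<in> F d \<Longrightarrow> \<bar>S d f - f (z d)\<bar> \<le> m d"
    and m: "m \<longlonglongrightarrow> 0"
  shows "\<not> curse K F S"
proof
  assume "curse K F S"
  then obtain c eps \<gamma> where c: "c > 0" and eps: "eps > 0" and \<gamma>: "\<gamma> > 0" and
    lower: "infinite {d. \<forall>n. achievable (K d) (F d) (S d) n eps \<longrightarrow> c * (1 + \<gamma>) ^ d \<le> real n}"
    unfolding curse_def by blast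
  obtain N1 where N1: "\<And>d. d \<ge> N1 \<Longrightarrow> m d < eps"
    using order_tendstoD(2)[OF m eps] unfolding eventually_sequentially by blast
  obtain N2 where N2: "1 / c < (1 + \<gamma>) ^ N2" using real_arch_pow[of "1 + \<gamma>" "1 / c"] \<gamma> by auto
  obtain d where d: "d \<ge> max 1 (max N1 N2)"
    and lower_d: "\<forall>n. achievable (K d) (F d) (S d) n eps \<longrightarrow> c * (1 + \<gamma>) ^ d \<le> real n"
    using lower unfolding infinite_nat_iff_unbounded_le by blast
  have "achievable (K d) (F d) (S d) 1 eps"
    using d z err N1[of d] by (intro achievable_one_point) force+
  then have "c * (1 + \<gamma>) ^ d \<le> 1" using lower_d by (metis of_nat_1)
  moreover have "(1 + \<gamma>) ^ N2 \<le> (1 + \<gamma>) ^ d" using d \<gamma> by (intro power_increasing) auto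
  then have "1 / c < (1 + \<gamma>) ^ d" using N2 by simp
  ultimately show False using c by (simp add: field_simps)
qed

theorem theorem1p2:
  fixes K :: "nat \<Rightarrow> (nat \<Rightarrow> real) set" and A B :: "nat \<Rightarrow> real"
  assumes iso: "\<And>d. d \<ge> 1 \<Longrightarrow> isotropic d (K d)"
    and Apos: "\<And>d. d \<ge> 1 \<Longrightarrow> A d > 0"
    and Bpos: "\<And>d. d \<ge> 1 \<Longrightarrow> B d > 0"
    and lim: "(\<lambda>d. min (A d * sqrt (real d) * iso_const d (K d))
                       (B d * real d * (iso_const d (K d))\<^sup>2)) \<longlonglongrightarrow> 0"
  shows "(\<lambda>d. SUP f\<in>C1class d (A d) (B d) (K d).
             \<bar>(LINT x:K d|lebd d. f x) - f (zerod d)\<bar>) \<longlonglongrightarrow> 0 \<and>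
         \<not> curse K (\<lambda>d. C1class d (A d) (B d) (K d)) (\<lambda>d f. LINT x:K d|lebd d. f x)"
proof
  define m where "m = (\<lambda>d. min (A d * sqrt (real d) * iso_const d (K d))
                       (B d * real d * (iso_const d (K d))\<^sup>2))"
  have m: "m \<longlonglongrightarrow> 0" using lim unfolding m_def .
  have err: "\<bar>(LINT x:K d|lebd d. f x) - f (zerod d)\<bar> \<le> m d"
    if "d \<ge> 1" "f \<in> C1class d (A d) (B d) (K d)" for d f
    using C1class_one_point_error[OF iso[OF that(1)] that(1) _ _ that(2)] Apos[OF that(1)] Bpos[OF that(1)]
    unfolding m_def by simp
  show "(\<lambda>d. SUP f\<in>C1class d (A d) (B d) (K d). \<bar>(LINT x:K d|lebd d. f x) - f (zerod d)\<bar>)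
      \<longlonglongrightarrow> 0"
  proof (rule SUP_abs_tendsto_0[OF _ err m])
    show "C1class d (A d) (B d) (K d) \<noteq> {}" if "d \<ge> 1" for d
      using zero_in_C1class Apos[OF that] Bpos[OF that] by (metis empty_iff less_imp_le)
  qed
  show "\<not> curse K (\<lambda>d. C1class d (A d) (B d) (K d)) (\<lambda>d f. LINT x:K d|lebd d. f x)"
    using isotropic_D(5)[OF iso] err m by (intro not_curse_if_one_point_error_tendsto_0) auto
qed

end
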